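(* Let $x\in V_\perp\oplus V_1$ be a point with properties (1) and (2) below, and set $\tilde x=(x_\perp,x_1,0)$: 1. for every $g\in\hat T$ with $(g\tilde x-\tilde x)_\perp=0$, we have $g|_{V_\perp}=I$; 2. for every $g\in\hat T$ with $(g\tilde x-\tilde x)_\perp=0$ and $(g\tilde x-\tilde x)_1=0$, we have $g|_{V_\perp}=I$ and $g|_{V_1}=I$. Then \[ \lim_{j\to\infty}\ \inf_{(g,a)\in\Gamma\setminus\Gamma_2}\|(g,a)(j\tilde x)-j\tilde x\|=\infty, \] where $j$ runs over the positive integers.
   Context: $E(n)$ is the Euclidean group, with elements $(g,a)$ acting by $(g,a)x=gx+a$, and $\psi(g,a)=g$. $\Gamma\subset E(n)$ is a discrete, fixed-point-free subgroup. $\Gamma^*$ is the intersection of $\Gamma$ with the identity component of the closure of $\Gamma\cdot\mathbb R^n$. By a theorem of Wolf: - $\Gamma^*$ is normal of finite index in $\Gamma$. - There exist a subspace $V\subset\mathbb R^n$ and a toral subgroup $T\subset O(n)$ such that $T$ acts trivially on $V$, $\Gamma^*\subset T\cdot V$, and $\Gamma^*$ is isomorphic to a discrete uniform subgroup of $V$. - $\hat T:=\overline{\psi(\Gamma)}$ is a finite extension of $T$. Let $\mathbb R^n=V_\perp\oplus V$ orthogonally. Define $\Gamma_1=\{(g,a)\in\Gamma: g|_{V_\perp}=I_{V_\perp}\}$ and $\Gamma^{**}=\Gamma^*\cap\Gamma_1$; its elements are pure translations by vectors in $V$. Let $V_2$ be the span of these translation vectors and $V_1=V\ominus V_2$, so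 that $\mathbb R^n=V_\perp\oplus V_1\oplus V_2$. Define \[ \Gamma_2=\{(g,a)\in\Gamma_1: g|_{V_1}=I_{V_1}\}. \] For $v\in\mathbb R^n$, $v_\perp$, $v_1$, $v_2$ denote its components in $V_\perp$, $V_1$, $V_2$. *)

theory Defs
  imports "HOL-Analysis.Analysis"
begin

text \<open>Elements of the Euclidean group E(n) are pairs (g,a) with g an orthogonal
  matrix and a a translation vector, acting by (g,a)x = g x + a.\<close>

type_synonym 'n euc = "(real^'n^'n) \<times> (real^'n)"

definition euc_act :: "'n::finite euc \<Rightarrow> real^'n \<Rightarrow> real^'n" where
  "euc_act \<gamma> x = fst \<gamma> *v x + snd \<gamma>"

definition euc_mult :: "'n::finite euc \<Rightarrow> 'n euc \<Rightarrow> 'n euc" where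
  "euc_mult \<gamma> \<delta> = (fst \<gamma> ** fst \<delta>, fst \<gamma> *v snd \<delta> + snd \<gamma>)"

definition euc_one :: "'n::finite euc" where
  "euc_one = (mat 1, 0)"

definition euc_inv :: "'n::finite euc \<Rightarrow> 'n euc" where
  "euc_inv \<gamma> = (transpose (fst \<gamma>), - (transpose (fst \<gamma>) *v snd \<gamma>))"

definition psi :: "'n::finite euc \<Rightarrow> real^'n^'n" where
  "psi \<gamma> = fst \<gamma>"

definition euc_subgroup :: "'n::finite euc set \<Rightarrow> bool" where
  "euc_subgroup G \<longleftrightarrow> (\<forall>\<gamma>\<in>G. orthogonal_matrix (fst \<gamma>)) \<and> euc_one \<in> G \<and>
     (\<forall>\<gamma>\<in>G. \<forall>\<delta>\<in>G. euc_mult \<gamma> \<delta> \<in> G) \<and> (\<forall>\<gamma>\<in>G. euc_inv \<gamma> \<in> G)"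

text \<open>Discrete: every element is isolated (topology of E(n) as a subspace of
  matrices times vectors).\<close>
definition discrete_set :: "'a::metric_space set \<Rightarrow> bool" where
  "discrete_set S \<longleftrightarrow> (\<forall>x\<in>S. \<exists>e>0. \<forall>y\<in>S. dist y x < e \<longrightarrow> y = x)"

definition fixed_point_free :: "'n::finite euc set \<Rightarrow> bool" where
  "fixed_point_free G \<longleftrightarrow> (\<forall>\<gamma>\<in>G. \<gamma> \<noteq> euc_one \<longrightarrow> (\<forall>y. euc_act \<gamma> y \<noteq> y))"

definition times_translations :: "'n::finite euc set \<Rightarrow> 'n euc set" where
  "times_translations G = {euc_mult \<gamma> (mat 1, v) | \<gamma> v. \<gamma> \<in> G}"

definition Gamma_star :: "'n::finite euc set \<Rightarrow> 'n euc set" where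
  "Gamma_star G = G \<inter> connected_component_set (closure (times_translations G)) euc_one"

definition That :: "'n::finite euc set \<Rightarrow> (real^'n^'n) set" where
  "That G = closure (psi ` G)"

definition toral_subgroup :: "(real^'n^'n::finite) set \<Rightarrow> bool" where
  "toral_subgroup T \<longleftrightarrow> (\<forall>t\<in>T. orthogonal_matrix t) \<and> mat 1 \<in> T \<and>
     (\<forall>s\<in>T. \<forall>t\<in>T. s ** t \<in> T) \<and> (\<forall>t\<in>T. transpose t \<in> T) \<and>
     (\<forall>s\<in>T. \<forall>t\<in>T. s ** t = t ** s) \<and> compact T \<and> connected T"

definition comp :: "(real^'n::finite) set \<Rightarrow> real^'n \<Rightarrow> real^'n" where
  "comp W v = (THE u. u \<in> W \<and> v - u \<in> orthogonal_comp W)"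

definition Vperp :: "(real^'n::finite) set \<Rightarrow> (real^'n) set" where
  "Vperp V = orthogonal_comp V"

definition Gamma1 :: "'n::finite euc set \<Rightarrow> (real^'n) set \<Rightarrow> 'n euc set" where
  "Gamma1 G V = {\<gamma> \<in> G. \<forall>v\<in>Vperp V. fst \<gamma> *v v = v}"

definition Gamma_sstar :: "'n::finite euc set \<Rightarrow> (real^'n) set \<Rightarrow> 'n euc set" where
  "Gamma_sstar G V = Gamma_star G \<inter> Gamma1 G V"

definition V2 :: "'n::finite euc set \<Rightarrow> (real^'n) set \<Rightarrow> (real^'n) set" where
  "V2 G V = span (snd ` Gamma_sstar G V)"

definition V1 :: "'n::finite euc set \<Rightarrow> (real^'n) set \<Rightarrow> (real^'n) set" where
  "V1 G V = V \<inter> orthogonal_comp (V2 G V)"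

definition Gamma2 :: "'n::finite euc set \<Rightarrow> (real^'n) set \<Rightarrow> 'n euc set" where
  "Gamma2 G V = {\<gamma> \<in> Gamma1 G V. \<forall>v\<in>V1 G V. fst \<gamma> *v v = v}"

end

theory Submission
  imports Defs
begin

text \<open>Suppose the displacements of elements \<open>\<gamma>\<^sub>k \<notin> \<Gamma>\<^sub>2\<close> at the points \<open>j\<^sub>k x\<close>, \<open>j\<^sub>k \<rightarrow> \<infinity>\<close>,
  stay bounded. The powers of \<open>\<gamma>\<^sub>k\<close> that fall into \<open>\<Gamma>\<^sup>*\<close> have bounded translation parts, so by
  discreteness only finitely many occur; a recurring one has a linear part fixing \<open>x\<close>, hence
  by (1) and the triviality of \<open>T\<close> on \<open>V\<close> it is the identity. So the linear parts of the
  \<open>\<gamma>\<^sub>k\<close> have bounded finite order. Along a subsequence lying in one coset of \<open>\<Gamma>\<^sup>*\<close> whose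
  linear parts converge, the \<open>V\<^sub>\<perp>\<close>-part of \<open>g x - x\<close> is \<open>O(1/j)\<close>, so the limit fixes \<open>V\<^sub>\<perp>\<close> by (1);
  being of finite order, the linear parts themselves eventually fix \<open>V\<^sub>\<perp>\<close>. These elements then
  differ by translations in \<open>V\<^sub>2\<close>, so the \<open>V\<^sub>1\<close>-part of their displacement is
  \<open>j (g x - x)\<^sub>1\<close> plus a constant; boundedness forces \<open>(g x - x)\<^sub>1 = 0\<close>, and (2) puts them
  into \<open>\<Gamma>\<^sub>2\<close>.\<close>

declare transpose_matrix_vector [simp del]

lemma matrix_vector_mult_uminus: "(A::'a::ring_1^'n^'m) *v (- x) = - (A *v x)"
  by (metis diff_0 matrix_vector_mult_diff_distrib matrix_vector_mult_0_right)

subsection \<open>Orthogonal matrices\<close>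

lemma orthogonal_matrix_transformation:
  "orthogonal_matrix Q \<Longrightarrow> orthogonal_transformation ((*v) (Q::real^'n^'n))"
  by (simp add: orthogonal_transformation_matrix matrix_vector_mul_linear)

lemma orthogonal_matrix_norm: "orthogonal_matrix Q \<Longrightarrow> norm ((Q::real^'n^'n) *v x) = norm x"
  using orthogonal_matrix_transformation orthogonal_transformation_norm by blast

lemma orthogonal_matrix_inner:
  "orthogonal_matrix Q \<Longrightarrow> ((Q::real^'n^'n) *v x) \<bullet> (Q *v y) = x \<bullet> y"
  using orthogonal_matrix_transformation orthogonal_transformation_def by blast

lemma orthogonal_matrix_dist:
  "orthogonal_matrix Q \<Longrightarrow> norm ((Q::real^'n^'n) *v x - Q *v y) = norm (x - y)"
  by (metis orthogonal_matrix_norm matrix_vector_mult_diff_distrib)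

lemma orthogonal_matrix_transpose_cancel:
  assumes "orthogonal_matrix (Q::real^'n^'n)"
  shows "transpose Q *v (Q *v x) = x" "Q *v (transpose Q *v x) = x"
  using assms by (metis orthogonal_matrix_def matrix_vector_mul_assoc matrix_vector_mul_lid)+

lemma orthogonal_matrix_fixing_preserves_orthogonal_comp:
  assumes "orthogonal_matrix Q" "\<forall>v\<in>V. Q *v v = v" "u \<in> orthogonal_comp V"
  shows "Q *v u \<in> orthogonal_comp (V :: (real^'n) set)"
  unfolding orthogonal_comp_def orthogonal_def
proof (intro CollectI ballI)
  fix y assume "y \<in> V"
  then have "y \<bullet> (Q *v u) = (Q *v y) \<bullet> (Q *v u)" using assms by simp
  also have "\<dots> = 0"
    using assms(3) \<open>y \<in> V\<close> orthogonal_matrix_inner[OF assms(1)]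
    by (simp add: orthogonal_comp_def orthogonal_def)
  finally show "y \<bullet> (Q *v u) = 0" .
qed

lemma orthogonal_matrix_fixing_orthogonal_comp_preserves:
  assumes "orthogonal_matrix Q" "subspace V" "\<forall>u\<in>orthogonal_comp V. Q *v u = u" "v \<in> V"
  shows "Q *v v \<in> (V :: (real^'n) set)"
  using orthogonal_matrix_fixing_preserves_orthogonal_comp[OF assms(1,3), of v]
    orthogonal_comp_self[OF assms(2)] assms(4) by simp

lemma matrix_eq_mat_1_if_fixes:
  assumes "subspace V" "\<forall>v\<in>V. A *v v = v" "\<forall>u\<in>orthogonal_comp V. A *v u = u"
  shows "A = (mat 1 :: real^'n^'n)"
proof -
  have "A *v y = mat 1 *v y" for y
  proof -
    have "y \<in> V + orthogonal_comp V" using subspace_sum_orthogonal_comp[OF assms(1)] by simp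
    then obtain v u where "v \<in> V" "u \<in> orthogonal_comp V" "y = v + u"
      by (rule set_plus_elim)
    then show ?thesis using assms by (simp add: matrix_vector_right_distrib)
  qed
  then show ?thesis by (simp add: matrix_eq)
qed

lemma norm_translation_le_displacement:
  assumes "orthogonal_matrix t" "\<forall>v\<in>V. t *v v = v" "v \<in> V"
  shows "norm v \<le> norm (t *v y + v - (y::real^'n))"
proof -
  have "(t *v y - y) \<bullet> v = (t *v y) \<bullet> (t *v v) - y \<bullet> v"
    using assms by (simp add: inner_diff_left)
  also have "\<dots> = 0" using orthogonal_matrix_inner[OF assms(1)] by simp
  finally have "orthogonal v (t *v y - y)" by (simp add: orthogonal_def inner_commute)
  then have "(norm (v + (t *v y - y)))\<^sup>2 = (norm v)\<^sup>2 + (norm (t *v y - y))\<^sup>2"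
    by (rule norm_add_Pythagorean)
  moreover have "v + (t *v y - y) = t *v y + v - y" by (simp add: algebra_simps)
  ultimately have "(norm (t *v y + v - y))\<^sup>2 = (norm v)\<^sup>2 + (norm (t *v y - y))\<^sup>2" by metis
  then have "(norm v)\<^sup>2 \<le> (norm (t *v y + v - y))\<^sup>2" by simp
  then show ?thesis by (rule power2_le_imp_le) simp
qed

subsection \<open>Orthogonal projection onto a subspace\<close>

lemma comp_exists:
  fixes W :: "(real^'n) set"
  assumes "subspace W"
  shows "\<exists>u. u \<in> W \<and> y - u \<in> orthogonal_comp W"
proof -
  have "y \<in> W + orthogonal_comp W" using subspace_sum_orthogonal_comp[OF assms] by simp
  then obtain u z where "u \<in> W" "z \<in> orthogonal_comp W" "y = u + z"
    by (rule set_plus_elim)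
  then show ?thesis by (intro exI[of _ u]) simp
qed

lemma comp_unique_aux:
  fixes W :: "(real^'n) set"
  assumes "subspace W" "u1 \<in> W" "y - u1 \<in> orthogonal_comp W" "u2 \<in> W" "y - u2 \<in> orthogonal_comp W"
  shows "u1 = u2"
proof -
  have "u1 - u2 \<in> W" by (rule subspace_diff[OF assms(1) assms(2) assms(4)])
  moreover have "(y - u2) - (y - u1) \<in> orthogonal_comp W"
    by (rule subspace_diff[OF subspace_orthogonal_comp assms(5) assms(3)])
  then have "u1 - u2 \<in> orthogonal_comp W" by simp
  ultimately have "u1 - u2 \<in> W \<inter> orthogonal_comp W" by blast
  then show ?thesis using orthogonal_Int_0[OF assms(1)] by simp
qed

lemma comp_in:
  assumes "subspace W"
  shows "comp W y \<in> W" "y - comp W y \<in> orthogonal_comp W"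
  unfolding comp_def
  using theI'[of "\<lambda>u. u \<in> W \<and> y - u \<in> orthogonal_comp W"]
    comp_exists[OF assms] comp_unique_aux[OF assms] by blast+

lemma comp_unique:
  assumes "subspace W" "u \<in> W" "y - u \<in> orthogonal_comp W"
  shows "comp W y = u"
  using comp_unique_aux[OF assms(1) _ _ assms(2,3)] comp_in[OF assms(1)] by blast

lemma comp_eq_0: "subspace W \<Longrightarrow> y \<in> orthogonal_comp W \<Longrightarrow> comp W y = 0"
  by (rule comp_unique) (auto simp: subspace_0)

lemma norm_comp_le:
  assumes "subspace W"
  shows "norm (comp W y) \<le> norm y"
proof -
  have "orthogonal (comp W y) (y - comp W y)"
    using comp_in[OF assms] by (simp add: orthogonal_comp_def)
  then have "(norm (comp W y + (y - comp W y)))\<^sup>2 = (norm (comp W y))\<^sup>2 + (norm (y - comp W y))\<^sup>2"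
    by (rule norm_add_Pythagorean)
  then have "(norm y)\<^sup>2 = (norm (comp W y))\<^sup>2 + (norm (y - comp W y))\<^sup>2" by simp
  then have "(norm (comp W y))\<^sup>2 \<le> (norm y)\<^sup>2" by simp
  then show ?thesis by (rule power2_le_imp_le) simp
qed


lemma bounded_linear_comp:
  assumes W: "subspace W"
  shows "bounded_linear (comp W)"
proof (rule bounded_linear_intro)
  note c = comp_in[OF W]
  have perp: "subspace (orthogonal_comp W)" by (rule subspace_orthogonal_comp)
  show "comp W (y + z) = comp W y + comp W z" for y z
  proof (rule comp_unique[OF W])
    show "comp W y + comp W z \<in> W" by (rule subspace_add[OF W c(1) c(1)])
    have "y + z - (comp W y + comp W z) = (y - comp W y) + (z - comp W z)" by simp
    also have "\<dots> \<in> orthogonal_comp W" by (rule subspace_add[OF perp c(2) c(2)])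
    finally show "y + z - (comp W y + comp W z) \<in> orthogonal_comp W" .
  qed
  show "comp W (a *\<^sub>R y) = a *\<^sub>R comp W y" for a y
  proof (rule comp_unique[OF W])
    show "a *\<^sub>R comp W y \<in> W" by (rule subspace_scale[OF W c(1)])
    have "a *\<^sub>R y - a *\<^sub>R comp W y = a *\<^sub>R (y - comp W y)" by (simp add: algebra_simps)
    also have "\<dots> \<in> orthogonal_comp W" by (rule subspace_scale[OF perp c(2)])
    finally show "a *\<^sub>R y - a *\<^sub>R comp W y \<in> orthogonal_comp W" .
  qed
  show "norm (comp W y) \<le> norm y * 1" for y using norm_comp_le[OF W] by simp
qed

lemma comp_linear:
  assumes "subspace W"
  shows "comp W (y + z) = comp W y + comp W z" "comp W (a *\<^sub>R y) = a *\<^sub>R comp W y"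
    "comp W (y - z) = comp W y - comp W z"
  using bounded_linear.linear[OF bounded_linear_comp[OF assms]]
  by (simp_all add: linear_add linear_scale linear_diff)

subsection \<open>The Euclidean group\<close>

lemma euc_act_mult: "euc_act (euc_mult a b) y = euc_act a (euc_act b y)"
  by (simp add: euc_act_def euc_mult_def matrix_vector_mul_assoc[symmetric]
      matrix_vector_right_distrib add.assoc)

lemma euc_mult_assoc: "euc_mult (euc_mult a b) c = euc_mult a (euc_mult b c)"
  by (simp add: euc_mult_def matrix_mul_assoc matrix_vector_mul_assoc[symmetric]
      matrix_vector_right_distrib add.assoc)

lemma euc_mult_one [simp]: "euc_mult euc_one a = a" "euc_mult a euc_one = a"
  by (auto simp: euc_mult_def euc_one_def prod_eq_iff)

lemma euc_mult_inv:
  assumes "orthogonal_matrix (fst a)"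
  shows "euc_mult a (euc_inv a) = euc_one" "euc_mult (euc_inv a) a = euc_one"
  using assms
  by (auto simp: euc_mult_def euc_inv_def euc_one_def orthogonal_matrix_def prod_eq_iff
      matrix_vector_mul_assoc matrix_vector_mult_uminus)

lemma euc_mult_left_cancel:
  assumes "orthogonal_matrix (fst a)" "euc_mult a b = euc_mult a c"
  shows "b = c"
proof -
  have "euc_mult (euc_inv a) (euc_mult a b) = euc_mult (euc_inv a) (euc_mult a c)"
    using assms by simp
  then show ?thesis by (simp add: euc_mult_assoc[symmetric] euc_mult_inv[OF assms(1)])
qed

lemma euc_mult_euc_inv:
  "euc_mult a (euc_inv b) = (fst a ** transpose (fst b), snd a - fst a *v (transpose (fst b) *v snd b))"
  by (simp add: euc_mult_def euc_inv_def matrix_vector_mult_uminus)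

lemma euc_act_scaled_displacement:
  "euc_act \<gamma> (c *\<^sub>R x) - c *\<^sub>R x = c *\<^sub>R (fst \<gamma> *v x - x) + snd \<gamma>"
  by (simp add: euc_act_def matrix_vector_mult_scaleR algebra_simps)

lemma euc_act_dist:
  "orthogonal_matrix (fst \<gamma>) \<Longrightarrow> norm (euc_act \<gamma> y - euc_act \<gamma> z) = norm (y - z)"
  by (simp add: euc_act_def orthogonal_matrix_dist)

lemma euc_subgroupD:
  assumes "euc_subgroup G"
  shows "euc_one \<in> G" "\<gamma> \<in> G \<Longrightarrow> orthogonal_matrix (fst \<gamma>)"
    "\<gamma> \<in> G \<Longrightarrow> \<delta> \<in> G \<Longrightarrow> euc_mult \<gamma> \<delta> \<in> G" "\<gamma> \<in> G \<Longrightarrow> euc_inv \<gamma> \<in> G"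
  using assms by (auto simp: euc_subgroup_def)

primrec epow :: "'n::finite euc \<Rightarrow> nat \<Rightarrow> 'n euc" where
  "epow \<gamma> 0 = euc_one"
| "epow \<gamma> (Suc i) = euc_mult \<gamma> (epow \<gamma> i)"

lemma epow_add: "epow \<gamma> (i + m) = euc_mult (epow \<gamma> i) (epow \<gamma> m)"
  by (induction i) (simp_all add: euc_mult_assoc)

lemma epow_in: "euc_subgroup G \<Longrightarrow> \<gamma> \<in> G \<Longrightarrow> epow \<gamma> i \<in> G"
  by (induction i) (auto simp: euc_subgroupD)

lemma epow_displacement_le:
  assumes "orthogonal_matrix (fst \<gamma>)"
  shows "norm (euc_act (epow \<gamma> r) y - y) \<le> real r * norm (euc_act \<gamma> y - y)"
proof (induction r)
  case 0 then show ?case by (simp add: euc_act_def euc_one_def)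
next
  case (Suc r)
  have "euc_act (epow \<gamma> (Suc r)) y - y
      = (euc_act \<gamma> (euc_act (epow \<gamma> r) y) - euc_act \<gamma> y) + (euc_act \<gamma> y - y)"
    by (simp add: euc_act_mult)
  then have "norm (euc_act (epow \<gamma> (Suc r)) y - y)
      \<le> norm (euc_act (epow \<gamma> r) y - y) + norm (euc_act \<gamma> y - y)"
    by (metis euc_act_dist[OF assms] norm_triangle_ineq)
  with Suc show ?case by (simp add: algebra_simps)
qed

lemma epow_in_finite_index_subgroup:
  fixes G H :: "'n::finite euc set"
  assumes grp: "euc_subgroup G" and fin: "finite ((\<lambda>\<gamma>. euc_mult \<gamma> ` H) ` G)"
    and one: "euc_one \<in> H" and \<gamma>: "\<gamma> \<in> G"
  shows "\<exists>r. 1 \<le> r \<and> r \<le> card ((\<lambda>\<gamma>. euc_mult \<gamma> ` H) ` G) \<and> epow \<gamma> r \<in> H"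
proof -
  define N where "N = card ((\<lambda>\<gamma>. euc_mult \<gamma> ` H) ` G)"
  define f where "f i = euc_mult (epow \<gamma> i) ` H" for i
  have "f ` {0..N} \<subseteq> (\<lambda>\<gamma>. euc_mult \<gamma> ` H) ` G" using epow_in[OF grp \<gamma>] f_def by auto
  then have "card (f ` {0..N}) \<le> N" using card_mono[OF fin] N_def by blast
  then have "\<not> inj_on f {0..N}" by (intro pigeonhole) simp
  then obtain a b where ab: "a < b" "b \<le> N" "f a = f b"
    unfolding inj_on_def by (metis atLeastAtMost_iff nat_neq_iff)
  have "epow \<gamma> b \<in> f a" using ab(3) one unfolding f_def by (metis euc_mult_one(2) image_eqI)
  then obtain \<delta> where \<delta>: "\<delta> \<in> H" "epow \<gamma> b = euc_mult (epow \<gamma> a) \<delta>" unfolding f_def by auto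
  have "epow \<gamma> b = euc_mult (epow \<gamma> a) (epow \<gamma> (b - a))" using epow_add[of \<gamma> a "b - a"] ab by simp
  then have "\<delta> = epow \<gamma> (b - a)"
    using \<delta> euc_mult_left_cancel[OF euc_subgroupD(2)[OF grp epow_in[OF grp \<gamma>]]] by metis
  then show ?thesis using \<delta> ab N_def by (intro exI[of _ "b - a"]) auto
qed

lemma tendsto_matrix_matrix_mult:
  fixes f g :: "'a \<Rightarrow> real^'n^'n"
  assumes "(f \<longlongrightarrow> A) F" "(g \<longlongrightarrow> B) F"
  shows "((\<lambda>x. f x ** g x) \<longlongrightarrow> A ** B) F"
  unfolding matrix_matrix_mult_def by (intro tendsto_intros assms)

lemma tendsto_matrix_vector_mult:
  fixes f :: "'a \<Rightarrow> real^'n^'n" and g :: "'a \<Rightarrow> real^'n"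
  assumes "(f \<longlongrightarrow> A) F" "(g \<longlongrightarrow> b) F"
  shows "((\<lambda>x. f x *v g x) \<longlongrightarrow> A *v b) F"
  unfolding matrix_vector_mult_def by (intro tendsto_intros assms)

lemma tendsto_transpose:
  fixes f :: "'a \<Rightarrow> real^'n^'n"
  assumes "(f \<longlongrightarrow> A) F"
  shows "((\<lambda>x. transpose (f x)) \<longlongrightarrow> transpose A) F"
  unfolding transpose_def by (intro tendsto_intros assms)

lemma tendsto_euc_mult:
  fixes f g :: "'a \<Rightarrow> 'n::finite euc"
  assumes "(f \<longlongrightarrow> a) F" "(g \<longlongrightarrow> b) F"
  shows "((\<lambda>x. euc_mult (f x) (g x)) \<longlongrightarrow> euc_mult a b) F"
  unfolding euc_mult_def
  by (intro tendsto_Pair tendsto_matrix_matrix_mult tendsto_matrix_vector_mult tendsto_add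
      tendsto_fst tendsto_snd assms)

lemma tendsto_euc_inv:
  fixes f :: "'a \<Rightarrow> 'n::finite euc"
  assumes "(f \<longlongrightarrow> a) F"
  shows "((\<lambda>x. euc_inv (f x)) \<longlongrightarrow> euc_inv a) F"
  unfolding euc_inv_def
  by (intro tendsto_Pair tendsto_matrix_vector_mult tendsto_transpose tendsto_minus
      tendsto_fst tendsto_snd assms)

text \<open>An infinite bounded subset contains a convergent sequence of distinct elements;
  the quotients of consecutive terms converge to the identity, contradicting discreteness.\<close>

lemma discrete_subgroup_bounded_finite:
  fixes G :: "'n::finite euc set"
  assumes grp: "euc_subgroup G" and disc: "discrete_set G" and S: "S \<subseteq> G" "bounded S"
  shows "finite S"
proof (rule ccontr)
  assume "infinite S"
  then obtain f :: "nat \<Rightarrow> 'n euc" where f: "inj f" "range f \<subseteq> S"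
    using infinite_countable_subset by blast
  have "bounded (range f)" using f S bounded_subset by blast
  then have "seq_compact (closure (range f))" by (simp add: compact_imp_seq_compact)
  then obtain l r where r: "strict_mono r" "((f \<circ> r) \<longlongrightarrow> l) sequentially"
    unfolding seq_compact_def using closure_subset by (metis image_subset_iff rangeI subsetD)
  define s where "s = f \<circ> r"
  have sG: "s n \<in> G" for n using f S s_def by auto
  have so: "orthogonal_matrix (fst (s n))" for n using euc_subgroupD(2)[OF grp sG] .
  have sl: "s \<longlonglongrightarrow> l" using r s_def by simp
  have "(\<lambda>n. euc_mult (euc_inv (s n)) (s n)) = (\<lambda>n. euc_one)"
    using euc_mult_inv(2)[OF so] by simp
  moreover have "(\<lambda>n. euc_mult (euc_inv (s n)) (s n)) \<longlonglongrightarrow> euc_mult (euc_inv l) l"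
    by (intro tendsto_euc_mult tendsto_euc_inv sl)
  ultimately have "(\<lambda>n. euc_one) \<longlonglongrightarrow> euc_mult (euc_inv l) l" by simp
  then have "euc_mult (euc_inv l) l = euc_one" by (rule LIMSEQ_unique[OF tendsto_const, symmetric])
  moreover have "(\<lambda>n. euc_mult (euc_inv (s n)) (s (Suc n))) \<longlonglongrightarrow> euc_mult (euc_inv l) l"
    by (intro tendsto_euc_mult tendsto_euc_inv sl LIMSEQ_Suc)
  ultimately have u: "(\<lambda>n. euc_mult (euc_inv (s n)) (s (Suc n))) \<longlonglongrightarrow> euc_one" by simp
  obtain e where e: "e > 0" "\<forall>y\<in>G. dist y euc_one < e \<longrightarrow> y = euc_one"
    using disc euc_subgroupD(1)[OF grp] unfolding discrete_set_def by blast
  obtain n where n: "dist (euc_mult (euc_inv (s n)) (s (Suc n))) euc_one < e"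
    using tendstoD[OF u e(1)] unfolding eventually_sequentially by blast
  have "euc_mult (euc_inv (s n)) (s (Suc n)) \<in> G"
    using euc_subgroupD(3,4)[OF grp] sG by blast
  then have "euc_mult (euc_inv (s n)) (s (Suc n)) = euc_one" using e n by blast
  then have "euc_mult (s n) (euc_mult (euc_inv (s n)) (s (Suc n))) = s n" by simp
  then have "s (Suc n) = s n" by (simp add: euc_mult_assoc[symmetric] euc_mult_inv[OF so])
  moreover have "inj s" unfolding s_def using f(1) r(1) by (simp add: inj_compose strict_mono_imp_inj_on)
  ultimately show False by (metis inj_eq n_not_Suc_n)
qed


text \<open>The orbit of \<open>w = g u - u\<close> under a rotation \<open>g\<close> of order \<open>r\<close> sums to \<open>g\<^sup>r u - u = 0\<close>,
  yet its \<open>i\<close>-th point lies within \<open>i c |w|\<close> of \<open>w\<close>; so \<open>r |w| \<le> r\<^sup>2 c |w|\<close>.\<close>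

lemma epow_periodic_almost_fixed_imp_fixed:
  fixes \<gamma> :: "'n::finite euc"
  assumes og: "orthogonal_matrix (fst \<gamma>)" and per: "fst (epow \<gamma> r) = mat 1" and r: "r \<ge> 1"
    and c: "norm (fst \<gamma> *v (fst \<gamma> *v u - u) - (fst \<gamma> *v u - u)) \<le> c * norm (fst \<gamma> *v u - u)"
    and cr: "c * real r < 1"
  shows "fst \<gamma> *v u = u"
proof -
  define g where "g = fst \<gamma>"
  define G where "G i = fst (epow \<gamma> i)" for i
  define w where "w = g *v u - u"
  have G_Suc: "G (Suc i) = g ** G i" "G (Suc i) = G i ** g" for i
    using epow_add[of \<gamma> i 1] by (simp_all add: G_def g_def euc_mult_def euc_one_def)
  have cw: "norm (g *v w - w) \<le> c * norm w" using c by (simp add: w_def g_def)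
  then have cw0: "0 \<le> c * norm w" by (meson norm_ge_zero order_trans)
  have "(\<Sum>i<r. G i *v w) = (\<Sum>i<r. G (Suc i) *v u - G i *v u)"
    by (simp add: w_def matrix_vector_mult_diff_distrib matrix_vector_mul_assoc G_Suc(2))
  also have "\<dots> = G r *v u - G 0 *v u" by (rule sum_lessThan_telescope)
  finally have orbit_sum: "(\<Sum>i<r. G i *v w) = 0" using per by (simp add: G_def euc_one_def)
  have orbit_near: "norm (G i *v w - w) \<le> real i * (c * norm w)" for i
  proof (induction i)
    case 0 then show ?case by (simp add: G_def euc_one_def)
  next
    case (Suc i)
    have "G (Suc i) *v w - w = (g *v (G i *v w) - g *v w) + (g *v w - w)"
      by (simp add: G_Suc(1) matrix_vector_mul_assoc)
    then have "norm (G (Suc i) *v w - w) \<le> norm (g *v (G i *v w) - g *v w) + norm (g *v w - w)"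
      by (metis norm_triangle_ineq)
    also have "norm (g *v (G i *v w) - g *v w) = norm (G i *v w - w)"
      using og by (simp add: g_def orthogonal_matrix_dist)
    finally show ?case using Suc.IH cw by (simp add: algebra_simps)
  qed
  have "(\<Sum>i<r. w - G i *v w) = (\<Sum>i<r. w)" using orbit_sum by (simp add: sum_subtractf)
  also have "\<dots> = real r *\<^sub>R w" by (subst sum_constant_scaleR) simp
  finally have "real r * norm w \<le> (\<Sum>i<r. norm (w - G i *v w))" by (metis norm_sum norm_scaleR abs_of_nat)
  also have "\<dots> \<le> (\<Sum>i<r. real r * (c * norm w))"
  proof (rule sum_mono)
    fix i assume "i \<in> {..<r}"
    then have "real i * (c * norm w) \<le> real r * (c * norm w)" using cw0 by (simp add: mult_right_mono)
    then show "norm (w - G i *v w) \<le> real r * (c * norm w)"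
      using orbit_near[of i] by (simp add: norm_minus_commute)
  qed
  also have "\<dots> = real r * (real r * c * norm w)" by simp
  finally have "norm w \<le> real r * c * norm w" using r by simp
  then have "norm w * (1 - c * real r) \<le> 0" by (simp add: algebra_simps)
  with cr have "norm w = 0" by (smt (verit) mult_pos_pos norm_ge_zero)
  then show ?thesis by (simp add: w_def g_def)
qed

lemma scaled_plus_bounded_imp_zero:
  assumes "\<forall>m::nat. \<exists>j::nat. j \<ge> m \<and> norm (real j *\<^sub>R c + v) \<le> B"
  shows "c = (0::'a::real_normed_vector)"
proof (rule ccontr)
  assume "c \<noteq> 0"
  then have cp: "norm c > 0" by simp
  obtain m :: nat where m: "real m > (B + norm v) / norm c" using reals_Archimedean2 by blast
  obtain j where j: "j \<ge> m" "norm (real j *\<^sub>R c + v) \<le> B" using assms by blast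
  have "real m * norm c > B + norm v" using m cp by (simp add: field_simps)
  moreover have "real j * norm c \<ge> real m * norm c" using j cp by (simp add: mult_right_mono)
  moreover have "norm (real j *\<^sub>R c) \<le> norm (real j *\<^sub>R c + v) + norm v"
    by (metis add_diff_cancel norm_triangle_ineq4)
  ultimately show False using j by simp
qed

lemma tendsto_0_if_scaled_bounded:
  fixes f :: "nat \<Rightarrow> 'a::real_normed_vector"
  assumes "\<And>n. n \<le> j n" "\<And>n. real (j n) * norm (f n) \<le> B"
  shows "f \<longlonglongrightarrow> 0"
proof (rule Lim_null_comparison)
  show "\<forall>\<^sub>F n in sequentially. norm (f n) \<le> B / real n"
    unfolding eventually_sequentially
  proof (intro exI allI impI)
    fix n :: nat assume "1 \<le> n"
    have "real n * norm (f n) \<le> real (j n) * norm (f n)"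
      using assms(1) by (simp add: mult_right_mono)
    then have "real n * norm (f n) \<le> B" using assms(2) order_trans by blast
    then show "norm (f n) \<le> B / real n" using \<open>1 \<le> n\<close> by (simp add: field_simps)
  qed
  show "(\<lambda>n. B / real n) \<longlonglongrightarrow> 0" by (rule lim_const_over_n)
qed


lemma eventually_matrix_vector_mult_small:
  fixes f :: "nat \<Rightarrow> real^'n^'m"
  assumes "f \<longlonglongrightarrow> A" "e > 0"
  shows "\<forall>\<^sub>F n in sequentially. \<forall>w. norm ((f n - A) *v w) \<le> e * norm w"
proof -
  define c where "c n = (\<Sum>i\<in>UNIV. \<Sum>j\<in>UNIV. \<bar>(f n - A) $ i $ j\<bar>)" for n
  have "(\<lambda>n. f n - A) \<longlonglongrightarrow> 0" using LIM_zero[OF assms(1)] .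
  then have "c \<longlonglongrightarrow> (\<Sum>i\<in>UNIV. \<Sum>j\<in>UNIV. \<bar>(0::real^'n^'m) $ i $ j\<bar>)"
    unfolding c_def by (intro tendsto_sum tendsto_rabs tendsto_vec_nth)
  then have small: "\<forall>\<^sub>F n in sequentially. c n < e" using assms(2) by (simp add: order_tendstoD(2))
  have bound: "norm ((f n - A) *v w) \<le> c n * norm w" for n w
  proof -
    have "norm ((f n - A) *v w) \<le> onorm ((*v) (f n - A)) * norm w" by (rule onorm) simp
    also have "\<dots> \<le> c n * norm w"
      unfolding c_def by (rule mult_right_mono[OF onorm_le_matrix_component_sum]) simp
    finally show ?thesis .
  qed
  show ?thesis using small
    by (rule eventually_mono) (meson bound mult_right_mono norm_ge_zero less_imp_le order_trans)
qed

subsection \<open>The subspaces \<open>V\<^sub>\<perp>\<close>, \<open>V\<^sub>1\<close>, \<open>V\<^sub>2\<close>\<close>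

lemma subspace_V1: "subspace V \<Longrightarrow> subspace (V1 G V)"
  unfolding V1_def by (rule subspace_inter[OF _ subspace_orthogonal_comp])

lemma comp_V1_eq_0_if_in_V2:
  assumes "subspace V" "y \<in> V2 G V"
  shows "comp (V1 G V) y = 0"
proof (rule comp_eq_0[OF subspace_V1[OF assms(1)]])
  show "y \<in> orthogonal_comp (V1 G V)"
    unfolding orthogonal_comp_def
  proof (intro CollectI ballI)
    fix z assume "z \<in> V1 G V"
    then have "z \<in> orthogonal_comp (V2 G V)" unfolding V1_def by blast
    then show "orthogonal z y" using assms(2) unfolding orthogonal_comp_def
      by (auto simp: orthogonal_commute)
  qed
qed

lemma comp_Vperp_eq_0: "v \<in> V \<Longrightarrow> comp (Vperp V) v = 0"
  unfolding Vperp_def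
  by (rule comp_eq_0[OF subspace_orthogonal_comp]) (use orthogonal_comp_subset in blast)

lemma comp_Vperp_displacement_eq_0:
  assumes V: "subspace V" and x: "x \<in> {u + w | u w. u \<in> Vperp V \<and> w \<in> V1 G V}"
    and g: "orthogonal_matrix g" "\<forall>u\<in>Vperp V. g *v u = u"
  shows "comp (Vperp V) (g *v x - x) = 0"
proof -
  obtain u w where uw: "x = u + w" "u \<in> Vperp V" "w \<in> V1 G V" using x by blast
  have wV: "w \<in> V" using uw(3) unfolding V1_def by blast
  have "g *v x - x = g *v w - w" using uw g(2) by (simp add: matrix_vector_right_distrib)
  moreover have "g *v w \<in> V"
    using orthogonal_matrix_fixing_orthogonal_comp_preserves[OF g(1) V] g(2) wV
    unfolding Vperp_def by blast
  ultimately have "g *v x - x \<in> V" using subspace_diff[OF V _ wV] by metis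
  then show ?thesis by (rule comp_Vperp_eq_0)
qed

locale wolf_structure =
  fixes \<Gamma> :: "'n::finite euc set" and V :: "(real^'n) set" and T :: "(real^'n^'n) set"
  assumes grp: "euc_subgroup \<Gamma>"
    and disc: "discrete_set \<Gamma>"
    and V_sub: "subspace V"
    and T_toral: "toral_subgroup T"
    and T_triv: "\<forall>t\<in>T. \<forall>v\<in>V. t *v v = v"
    and star_sub: "Gamma_star \<Gamma> \<subseteq> {(t, v). t \<in> T \<and> v \<in> V}"
    and star_normal: "\<forall>\<gamma>\<in>\<Gamma>. \<forall>\<delta>\<in>Gamma_star \<Gamma>. euc_mult (euc_mult \<gamma> \<delta>) (euc_inv \<gamma>) \<in> Gamma_star \<Gamma>"
    and star_index: "finite ((\<lambda>\<gamma>. euc_mult \<gamma> ` Gamma_star \<Gamma>) ` \<Gamma>)"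
    and T_in_That: "T \<subseteq> That \<Gamma>"
begin

definition star_coset :: "'n euc \<Rightarrow> 'n euc set" where
  "star_coset \<gamma> = euc_mult \<gamma> ` Gamma_star \<Gamma>"

lemma star_subset: "Gamma_star \<Gamma> \<subseteq> \<Gamma>"
  unfolding Gamma_star_def by blast

lemma one_in_star: "euc_one \<in> Gamma_star \<Gamma>"
proof -
  have "euc_one = euc_mult euc_one (mat 1, 0)" by (simp add: euc_mult_def euc_one_def)
  then have "euc_one \<in> times_translations \<Gamma>"
    unfolding times_translations_def using euc_subgroupD(1)[OF grp] by blast
  then have "euc_one \<in> closure (times_translations \<Gamma>)" using closure_subset by blast
  then show ?thesis unfolding Gamma_star_def using euc_subgroupD(1)[OF grp] by auto
qed

lemma star_memD:
  assumes "\<delta> \<in> Gamma_star \<Gamma>"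
  shows "fst \<delta> \<in> T" "snd \<delta> \<in> V"
  using assms star_sub by auto

lemma T_orthogonal: "t \<in> T \<Longrightarrow> orthogonal_matrix t"
  using T_toral by (simp add: toral_subgroup_def)

lemma T_eq_mat_1: "t \<in> T \<Longrightarrow> \<forall>u\<in>Vperp V. t *v u = u \<Longrightarrow> t = mat 1"
  using matrix_eq_mat_1_if_fixes[OF V_sub] T_triv unfolding Vperp_def by blast

lemma T_preserves_Vperp: "t \<in> T \<Longrightarrow> u \<in> Vperp V \<Longrightarrow> t *v u \<in> Vperp V"
  using orthogonal_matrix_fixing_preserves_orthogonal_comp T_orthogonal T_triv
  unfolding Vperp_def by blast

lemma fst_in_That: "\<gamma> \<in> \<Gamma> \<Longrightarrow> fst \<gamma> \<in> That \<Gamma>"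
  unfolding That_def psi_def using closure_subset by fastforce

lemma finite_star_translation_le: "finite {\<delta> \<in> Gamma_star \<Gamma>. norm (snd \<delta>) \<le> B}"
proof (rule discrete_subgroup_bounded_finite[OF grp disc])
  show "{\<delta> \<in> Gamma_star \<Gamma>. norm (snd \<delta>) \<le> B} \<subseteq> \<Gamma>" using star_subset by blast
  have "{\<delta> \<in> Gamma_star \<Gamma>. norm (snd \<delta>) \<le> B} \<subseteq> T \<times> cball 0 B"
    using star_memD by (auto simp: mem_Times_iff)
  moreover have "bounded (T \<times> cball 0 B)"
    using T_toral by (intro bounded_Times compact_imp_bounded bounded_cball) (simp add: toral_subgroup_def)
  ultimately show "bounded {\<delta> \<in> Gamma_star \<Gamma>. norm (snd \<delta>) \<le> B}" by (rule bounded_subset[rotated])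
qed

lemma star_coset_self: "\<gamma> \<in> star_coset \<gamma>"
  unfolding star_coset_def using one_in_star by (metis euc_mult_one(2) image_eqI)

lemma star_coset_eqD: "star_coset \<gamma> = star_coset \<gamma>' \<Longrightarrow> \<exists>\<delta>\<in>Gamma_star \<Gamma>. \<gamma> = euc_mult \<gamma>' \<delta>"
  using star_coset_self[of \<gamma>] unfolding star_coset_def by auto

text \<open>Since \<open>T\<close> fixes \<open>V\<close>, the translation part of an element of \<open>\<Gamma>\<^sup>*\<close> is bounded by its
  displacement at any point.\<close>

lemma epow_in_star_translation_le:
  assumes \<gamma>: "\<gamma> \<in> \<Gamma>"
  shows "\<exists>r. 1 \<le> r \<and> r \<le> card (star_coset ` \<Gamma>) \<and> epow \<gamma> r \<in> Gamma_star \<Gamma> \<and>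
           (\<forall>y. norm (snd (epow \<gamma> r)) \<le> real r * norm (euc_act \<gamma> y - y))"
proof -
  obtain r where r: "1 \<le> r" "r \<le> card (star_coset ` \<Gamma>)" "epow \<gamma> r \<in> Gamma_star \<Gamma>"
    using epow_in_finite_index_subgroup[OF grp star_index one_in_star \<gamma>]
    unfolding star_coset_def by blast
  have "norm (snd (epow \<gamma> r)) \<le> real r * norm (euc_act \<gamma> y - y)" for y
  proof -
    have "norm (snd (epow \<gamma> r)) \<le> norm (fst (epow \<gamma> r) *v y + snd (epow \<gamma> r) - y)"
      using norm_translation_le_displacement[of _ V] star_memD[OF r(3)] T_orthogonal T_triv
      by blast
    also have "\<dots> = norm (euc_act (epow \<gamma> r) y - y)" by (simp add: euc_act_def)
    also have "\<dots> \<le> real r * norm (euc_act \<gamma> y - y)"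
      by (rule epow_displacement_le[OF euc_subgroupD(2)[OF grp \<gamma>]])
    finally show ?thesis .
  qed
  then show ?thesis using r by blast
qed

lemma coset_translation_Vperp_le:
  assumes \<gamma>: "\<gamma> \<in> \<Gamma>" and \<delta>: "\<delta> \<in> Gamma_star \<Gamma>"
  shows "norm (comp (Vperp V) (snd (euc_mult \<gamma> \<delta>))) \<le> norm (snd \<gamma>)"
proof -
  define \<epsilon> where "\<epsilon> = euc_mult \<gamma> \<delta>"
  have \<epsilon>: "\<epsilon> \<in> \<Gamma>" using euc_subgroupD(3)[OF grp \<gamma>] \<delta> star_subset \<epsilon>_def by blast
  have P: "subspace (Vperp V)" unfolding Vperp_def by (rule subspace_orthogonal_comp)
  have "euc_mult \<epsilon> (euc_inv \<gamma>) \<in> Gamma_star \<Gamma>" using star_normal \<gamma> \<delta> \<epsilon>_def by blast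
  then have "comp (Vperp V) (snd \<epsilon> - fst \<epsilon> *v (transpose (fst \<gamma>) *v snd \<gamma>)) = 0"
    using comp_Vperp_eq_0 star_memD(2) euc_mult_euc_inv[of \<epsilon> \<gamma>] by (metis snd_conv)
  then have "comp (Vperp V) (snd \<epsilon>) = comp (Vperp V) (fst \<epsilon> *v (transpose (fst \<gamma>) *v snd \<gamma>))"
    using comp_linear(3)[OF P] by simp
  also have "norm \<dots> \<le> norm (fst \<epsilon> *v (transpose (fst \<gamma>) *v snd \<gamma>))" by (rule norm_comp_le[OF P])
  also have "\<dots> = norm (snd \<gamma>)"
    using euc_subgroupD(2)[OF grp] \<gamma> \<epsilon> by (simp add: orthogonal_matrix_norm)
  finally show ?thesis unfolding \<epsilon>_def .
qed

lemma coset_fixing_Vperp: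
  assumes \<gamma>: "\<gamma> \<in> \<Gamma>" and \<delta>: "\<delta> \<in> Gamma_star \<Gamma>"
    and fix\<gamma>: "\<forall>u\<in>Vperp V. fst \<gamma> *v u = u"
    and fix\<gamma>\<delta>: "\<forall>u\<in>Vperp V. fst (euc_mult \<gamma> \<delta>) *v u = u"
  shows "fst (euc_mult \<gamma> \<delta>) = fst \<gamma>" "snd (euc_mult \<gamma> \<delta>) - snd \<gamma> \<in> V2 \<Gamma> V"
proof -
  have o\<gamma>: "orthogonal_matrix (fst \<gamma>)" using euc_subgroupD(2)[OF grp \<gamma>] .
  have fst\<epsilon>: "fst (euc_mult \<gamma> \<delta>) = fst \<gamma> ** fst \<delta>" by (simp add: euc_mult_def)
  have "fst \<delta> *v u = u" if u: "u \<in> Vperp V" for u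
  proof -
    have "fst \<delta> *v u = transpose (fst \<gamma>) *v (fst (euc_mult \<gamma> \<delta>) *v u)"
      using orthogonal_matrix_transpose_cancel(1)[OF o\<gamma>]
      by (simp add: fst\<epsilon> matrix_vector_mul_assoc[symmetric])
    also have "\<dots> = transpose (fst \<gamma>) *v (fst \<gamma> *v u)" using fix\<gamma> fix\<gamma>\<delta> u by simp
    finally show ?thesis using orthogonal_matrix_transpose_cancel(1)[OF o\<gamma>] by simp
  qed
  then have "fst \<delta> = mat 1" using T_eq_mat_1 star_memD(1)[OF \<delta>] by blast
  then show fst_eq: "fst (euc_mult \<gamma> \<delta>) = fst \<gamma>" by (simp add: fst\<epsilon>)
  have "euc_mult (euc_mult \<gamma> \<delta>) (euc_inv \<gamma>) \<in> Gamma_star \<Gamma>" using star_normal \<gamma> \<delta> by blast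
  moreover have "euc_mult (euc_mult \<gamma> \<delta>) (euc_inv \<gamma>) = (mat 1, snd (euc_mult \<gamma> \<delta>) - snd \<gamma>)"
    using o\<gamma> fst_eq
    by (simp add: euc_mult_euc_inv orthogonal_matrix_def orthogonal_matrix_transpose_cancel(2))
  ultimately have "(mat 1, snd (euc_mult \<gamma> \<delta>) - snd \<gamma>) \<in> Gamma_sstar \<Gamma> V"
    unfolding Gamma_sstar_def Gamma1_def using star_subset by auto
  then show "snd (euc_mult \<gamma> \<delta>) - snd \<gamma> \<in> V2 \<Gamma> V"
    unfolding V2_def by (metis image_eqI snd_conv span_base)
qed

lemma preserves_Vperp_if_mult_fixes:
  assumes t: "t \<in> T" and gt_fixes: "\<forall>u\<in>Vperp V. (g ** t) *v u = u" and u: "u \<in> Vperp V"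
  shows "g *v u \<in> Vperp V"
proof -
  have tu: "transpose t *v u \<in> Vperp V"
    using T_preserves_Vperp T_toral t u by (simp add: toral_subgroup_def)
  have "g *v u = (g ** t) *v (transpose t *v u)"
    using orthogonal_matrix_transpose_cancel(2)[OF T_orthogonal[OF t]]
    by (simp add: matrix_vector_mul_assoc[symmetric])
  also have "\<dots> = transpose t *v u" using gt_fixes tu by blast
  finally show ?thesis using tu by simp
qed

lemma star_coset_preserves_Vperp:
  assumes "\<delta> \<in> Gamma_star \<Gamma>" "\<forall>u\<in>Vperp V. fst \<gamma> *v u \<in> Vperp V" "u \<in> Vperp V"
  shows "fst (euc_mult \<gamma> \<delta>) *v u \<in> Vperp V"
  using assms T_preserves_Vperp star_memD(1)
  by (simp add: euc_mult_def matrix_vector_mul_assoc[symmetric])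

end


locale wolf_bounded_orbit = wolf_structure \<Gamma> V T
  for \<Gamma> :: "'n::finite euc set" and V T +
  fixes x :: "real^'n" and M :: real and j :: "nat \<Rightarrow> nat" and \<gamma> :: "nat \<Rightarrow> 'n euc"
  assumes prop1: "\<forall>g\<in>That \<Gamma>. comp (Vperp V) (g *v x - x) = 0 \<longrightarrow> (\<forall>v\<in>Vperp V. g *v v = v)"
    and j_ge: "\<And>k. k \<le> j k"
    and \<gamma>_in: "\<And>k. \<gamma> k \<in> \<Gamma>"
    and displacement_le: "\<And>k. norm (euc_act (\<gamma> k) (real (j k) *\<^sub>R x) - real (j k) *\<^sub>R x) \<le> M"
begin

lemma M_nonneg: "0 \<le> M"
  using displacement_le[of 0] norm_ge_zero order_trans by blast

lemma orthogonal_fst_\<gamma>: "orthogonal_matrix (fst (\<gamma> k))"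
  using euc_subgroupD(2)[OF grp \<gamma>_in] .

lemma recurring_star_power_trivial:
  assumes K: "infinite K" and d: "d \<in> Gamma_star \<Gamma>" and Kd: "\<And>k. k \<in> K \<Longrightarrow> epow (\<gamma> k) r = d"
  shows "fst d = mat 1"
proof -
  have "fst d *v x - x = 0"
  proof (rule scaled_plus_bounded_imp_zero[where v = "snd d" and B = "real r * M"], intro allI)
    fix m
    obtain k where k: "k \<ge> m" "k \<in> K" using K infinite_nat_iff_unbounded_le by blast
    have "norm (real (j k) *\<^sub>R (fst d *v x - x) + snd d)
        = norm (euc_act (epow (\<gamma> k) r) (real (j k) *\<^sub>R x) - real (j k) *\<^sub>R x)"
      by (simp add: euc_act_scaled_displacement Kd[OF k(2)])
    also have "\<dots> \<le> real r * norm (euc_act (\<gamma> k) (real (j k) *\<^sub>R x) - real (j k) *\<^sub>R x)"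
      by (rule epow_displacement_le[OF orthogonal_fst_\<gamma>])
    also have "\<dots> \<le> real r * M" using displacement_le by (intro mult_left_mono) auto
    finally show "\<exists>j\<ge>m. norm (real j *\<^sub>R (fst d *v x - x) + snd d) \<le> real r * M"
      using j_ge[of k] k by (intro exI[of _ "j k"]) auto
  qed
  then have "comp (Vperp V) (fst d *v x - x) = 0" using comp_Vperp_eq_0 V_sub subspace_0 by metis
  then have "\<forall>u\<in>Vperp V. fst d *v u = u" using prop1 T_in_That star_memD(1)[OF d] by blast
  then show "fst d = mat 1" using T_eq_mat_1 star_memD(1)[OF d] by blast
qed

text \<open>The powers of the \<open>\<gamma> k\<close> landing in \<open>\<Gamma>\<^sup>*\<close> have bounded exponents and translation
  parts, so by discreteness one of them recurs infinitely often.\<close>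

lemma periodic_on_infinite_subset:
  obtains r K where "1 \<le> r" "infinite K" "\<And>k. k \<in> K \<Longrightarrow> fst (epow (\<gamma> k) r) = mat 1"
proof -
  define N where "N = card (star_coset ` \<Gamma>)"
  define F where "F = {\<delta> \<in> Gamma_star \<Gamma>. norm (snd \<delta>) \<le> real N * M}"
  have "\<exists>r. 1 \<le> r \<and> r \<le> N \<and> epow (\<gamma> k) r \<in> F" for k
  proof -
    obtain r where r: "1 \<le> r" "r \<le> N" "epow (\<gamma> k) r \<in> Gamma_star \<Gamma>"
      and tr: "norm (snd (epow (\<gamma> k) r)) \<le> real r * norm (euc_act (\<gamma> k) (real (j k) *\<^sub>R x) - real (j k) *\<^sub>R x)"
      using epow_in_star_translation_le[OF \<gamma>_in] unfolding N_def by blast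
    have "real r * norm (euc_act (\<gamma> k) (real (j k) *\<^sub>R x) - real (j k) *\<^sub>R x) \<le> real N * M"
      using r(2) M_nonneg displacement_le[of k] by (intro mult_mono) auto
    then show ?thesis using r tr unfolding F_def by auto
  qed
  then obtain rr where rr: "\<And>k. 1 \<le> rr k \<and> rr k \<le> N \<and> epow (\<gamma> k) (rr k) \<in> F" by metis
  define h where "h k = (rr k, epow (\<gamma> k) (rr k))" for k
  have "range h \<subseteq> {1..N} \<times> F" using rr h_def by auto
  then have "finite (range h)"
    using finite_star_translation_le unfolding F_def
    by (meson finite_SigmaI finite_atLeastAtMost finite_subset)
  then obtain rd where "infinite (h -` {rd})" using inf_img_fin_domE infinite_UNIV_nat by blast
  then obtain r d where K: "infinite (h -` {(r, d)})" by (cases rd) simp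
  have Kh: "rr k = r" "epow (\<gamma> k) r = d" if "k \<in> h -` {(r, d)}" for k using that h_def by auto
  obtain k0 where k0: "k0 \<in> h -` {(r, d)}" using K by (metis ex_in_conv infinite_imp_nonempty)
  have r1: "1 \<le> r" and d: "d \<in> Gamma_star \<Gamma>" using rr[of k0] Kh[OF k0] F_def by auto
  have "fst d = mat 1" using recurring_star_power_trivial[OF K d] Kh(2) by blast
  then show thesis using that[OF r1 K] Kh by simp
qed

lemma infinite_subset_same_coset:
  assumes "infinite K"
  obtains K' where "K' \<subseteq> K" "infinite K'"
    "\<And>k l. k \<in> K' \<Longrightarrow> l \<in> K' \<Longrightarrow> star_coset (\<gamma> k) = star_coset (\<gamma> l)"
proof -
  have "(\<lambda>k. star_coset (\<gamma> k)) ` K \<subseteq> star_coset ` \<Gamma>" using \<gamma>_in by auto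
  then have "finite ((\<lambda>k. star_coset (\<gamma> k)) ` K)"
    using star_index finite_subset unfolding star_coset_def by blast
  then obtain C where "infinite ((\<lambda>k. star_coset (\<gamma> k)) -` {C} \<inter> K)"
    using inf_img_fin_domE'[OF _ assms] by metis
  then show thesis by (rule that[rotated]) auto
qed

lemma Vperp_displacement_scaled_le:
  assumes "star_coset (\<gamma> k) = star_coset (\<gamma> l)"
  shows "real (j k) * norm (comp (Vperp V) (fst (\<gamma> k) *v x - x)) \<le> M + norm (snd (\<gamma> l))"
proof -
  define P where "P = Vperp V"
  have P: "subspace P" unfolding P_def Vperp_def by (rule subspace_orthogonal_comp)
  obtain \<delta> where \<delta>: "\<delta> \<in> Gamma_star \<Gamma>" "\<gamma> k = euc_mult (\<gamma> l) \<delta>" using star_coset_eqD[OF assms] by blast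
  define D where "D = euc_act (\<gamma> k) (real (j k) *\<^sub>R x) - real (j k) *\<^sub>R x"
  have "comp P D = real (j k) *\<^sub>R comp P (fst (\<gamma> k) *v x - x) + comp P (snd (\<gamma> k))"
    unfolding D_def euc_act_scaled_displacement by (simp add: comp_linear[OF P])
  then have "real (j k) *\<^sub>R comp P (fst (\<gamma> k) *v x - x) = comp P D - comp P (snd (\<gamma> k))"
    by simp
  then have "norm (real (j k) *\<^sub>R comp P (fst (\<gamma> k) *v x - x))
      \<le> norm (comp P D) + norm (comp P (snd (\<gamma> k)))"
    by (simp only: norm_triangle_ineq4)
  moreover have "norm (comp P D) \<le> M"
    using norm_comp_le[OF P, of D] displacement_le[of k] unfolding D_def by linarith
  moreover have "norm (comp P (snd (\<gamma> k))) \<le> norm (snd (\<gamma> l))"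
    using coset_translation_Vperp_le[OF \<gamma>_in \<delta>(1)] \<delta>(2) unfolding P_def by simp
  ultimately show ?thesis unfolding P_def by simp
qed

lemma coset_convergent_subseq:
  assumes K: "infinite K" and coset: "\<And>k. k \<in> K \<Longrightarrow> star_coset (\<gamma> k) = star_coset (\<gamma> l)"
  obtains \<kappa> t where "strict_mono \<kappa>" "\<And>n. \<kappa> n \<in> K" "t \<in> T"
    "(\<lambda>n. fst (\<gamma> (\<kappa> n))) \<longlonglongrightarrow> fst (\<gamma> l) ** t"
proof -
  have "\<forall>k\<in>K. \<exists>\<delta>. \<delta> \<in> Gamma_star \<Gamma> \<and> \<gamma> k = euc_mult (\<gamma> l) \<delta>"
    using star_coset_eqD[OF coset] by blast
  from bchoice[OF this] obtain \<delta> where \<delta>: "\<And>k. k \<in> K \<Longrightarrow> \<delta> k \<in> Gamma_star \<Gamma> \<and> \<gamma> k = euc_mult (\<gamma> l) (\<delta> k)"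
    by blast
  define \<sigma> where "\<sigma> = enumerate K"
  have \<sigma>: "strict_mono \<sigma>" "\<And>n. \<sigma> n \<in> K"
    unfolding \<sigma>_def by (simp_all add: K strict_mono_enumerate enumerate_in_set)
  have "seq_compact T" using T_toral compact_imp_seq_compact by (auto simp: toral_subgroup_def)
  moreover have "\<forall>n. fst (\<delta> (\<sigma> n)) \<in> T" using \<delta> \<sigma>(2) star_memD(1) by blast
  ultimately obtain t \<rho> where t: "t \<in> T" "strict_mono \<rho>" "((\<lambda>n. fst (\<delta> (\<sigma> n))) \<circ> \<rho>) \<longlonglongrightarrow> t"
    by (rule seq_compactE)
  have "(\<lambda>n. fst (\<gamma> l) ** ((\<lambda>n. fst (\<delta> (\<sigma> n))) \<circ> \<rho>) n) \<longlonglongrightarrow> fst (\<gamma> l) ** t"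
    by (rule tendsto_matrix_matrix_mult[OF tendsto_const t(3)])
  moreover have "fst (\<gamma> l) ** ((\<lambda>n. fst (\<delta> (\<sigma> n))) \<circ> \<rho>) n = fst (\<gamma> ((\<sigma> \<circ> \<rho>) n))" for n
    using \<delta>[OF \<sigma>(2)[of "\<rho> n"]] by (simp add: euc_mult_def)
  ultimately have "(\<lambda>n. fst (\<gamma> ((\<sigma> \<circ> \<rho>) n))) \<longlonglongrightarrow> fst (\<gamma> l) ** t" by simp
  then show thesis using that strict_mono_o[OF \<sigma>(1) t(2)] \<sigma>(2) t(1) by simp
qed

text \<open>Along a sequence within one coset of \<open>\<Gamma>\<^sup>*\<close>, the \<open>V\<^sub>\<perp>\<close>-part of \<open>g x - x\<close> is
  \<open>O(1/j)\<close>, so a limit \<open>g\<close> of the linear parts satisfies property (1).\<close>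

lemma coset_limit_fixes_Vperp:
  assumes \<kappa>: "strict_mono \<kappa>" and coset: "\<And>n. star_coset (\<gamma> (\<kappa> n)) = star_coset (\<gamma> l)"
    and lim: "(\<lambda>n. fst (\<gamma> (\<kappa> n))) \<longlonglongrightarrow> g"
  shows "\<forall>u\<in>Vperp V. g *v u = u"
proof -
  define P where "P = Vperp V"
  have P: "subspace P" unfolding P_def Vperp_def by (rule subspace_orthogonal_comp)
  have "(\<lambda>n. comp P (fst (\<gamma> (\<kappa> n)) *v x - x)) \<longlonglongrightarrow> comp P (g *v x - x)"
    by (intro bounded_linear.tendsto[OF bounded_linear_comp[OF P]] tendsto_diff tendsto_matrix_vector_mult lim tendsto_const)
  moreover have "(\<lambda>n. comp P (fst (\<gamma> (\<kappa> n)) *v x - x)) \<longlonglongrightarrow> 0"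
  proof (rule tendsto_0_if_scaled_bounded)
    show "n \<le> j (\<kappa> n)" for n using seq_suble[OF \<kappa>, of n] j_ge[of "\<kappa> n"] by linarith
    show "real (j (\<kappa> n)) * norm (comp P (fst (\<gamma> (\<kappa> n)) *v x - x)) \<le> M + norm (snd (\<gamma> l))" for n
      using Vperp_displacement_scaled_le[OF coset] unfolding P_def .
  qed
  ultimately have "comp P (g *v x - x) = 0" by (rule LIMSEQ_unique)
  moreover have "g \<in> That \<Gamma>"
    unfolding That_def closure_sequential
    by (rule exI[of _ "\<lambda>n. fst (\<gamma> (\<kappa> n))"]) (use lim \<gamma>_in in \<open>auto simp: psi_def\<close>)
  ultimately show ?thesis using prop1 unfolding P_def by blast
qed

lemma eventually_fixes_Vperp:
  assumes r: "1 \<le> r" and per: "\<And>n. fst (epow (\<gamma> (\<kappa> n)) r) = mat 1"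
    and lim: "(\<lambda>n. fst (\<gamma> (\<kappa> n))) \<longlonglongrightarrow> g" and g: "\<forall>u\<in>Vperp V. g *v u = u"
    and pres: "\<And>n u. u \<in> Vperp V \<Longrightarrow> fst (\<gamma> (\<kappa> n)) *v u \<in> Vperp V"
  shows "\<forall>\<^sub>F n in sequentially. \<forall>u\<in>Vperp V. fst (\<gamma> (\<kappa> n)) *v u = u"
proof -
  have "1 / (2 * real r) > 0" using r by simp
  from eventually_matrix_vector_mult_small[OF lim this] show ?thesis
  proof (rule eventually_mono, intro ballI)
  fix n u
  assume small: "\<forall>w. norm ((fst (\<gamma> (\<kappa> n)) - g) *v w) \<le> 1 / (2 * real r) * norm w"
    and u: "u \<in> Vperp V"
  define h where "h = fst (\<gamma> (\<kappa> n))"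
  have P: "subspace (Vperp V)" unfolding Vperp_def by (rule subspace_orthogonal_comp)
  have w: "h *v u - u \<in> Vperp V" using subspace_diff[OF P pres[OF u] u] h_def by simp
  have "norm (h *v (h *v u - u) - (h *v u - u)) = norm ((h - g) *v (h *v u - u))"
    using g w by (simp add: matrix_vector_mult_diff_rdistrib)
  also have "\<dots> \<le> 1 / (2 * real r) * norm (h *v u - u)" using small h_def by blast
  finally have "norm (h *v (h *v u - u) - (h *v u - u)) \<le> 1 / (2 * real r) * norm (h *v u - u)" .
  moreover have "1 / (2 * real r) * real r < 1" using r by simp
  ultimately show "fst (\<gamma> (\<kappa> n)) *v u = u"
    using epow_periodic_almost_fixed_imp_fixed[OF orthogonal_fst_\<gamma> per r] h_def by blast
  qed
qed

text \<open>Elements of one coset of \<open>\<Gamma>\<^sup>*\<close> fixing \<open>V\<^sub>\<perp>\<close> share their linear part and their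
  \<open>V\<^sub>1\<close>-translation; bounded displacement at \<open>j x\<close> for unbounded \<open>j\<close> then forces \<open>g x - x \<in> V\<^sub>2\<close>,
  and property (2) applies.\<close>

lemma in_Gamma2_if_fixes_Vperp:
  assumes x_in: "x \<in> {u + w | u w. u \<in> Vperp V \<and> w \<in> V1 \<Gamma> V}"
    and prop2: "\<forall>g\<in>That \<Gamma>. comp (Vperp V) (g *v x - x) = 0 \<and> comp (V1 \<Gamma> V) (g *v x - x) = 0 \<longrightarrow>
                  (\<forall>v\<in>Vperp V. g *v v = v) \<and> (\<forall>v\<in>V1 \<Gamma> V. g *v v = v)"
    and K: "infinite K" and l: "l \<in> K"
    and coset: "\<And>k. k \<in> K \<Longrightarrow> star_coset (\<gamma> k) = star_coset (\<gamma> l)"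
    and fixes_Vperp: "\<And>k. k \<in> K \<Longrightarrow> \<forall>u\<in>Vperp V. fst (\<gamma> k) *v u = u"
  shows "\<gamma> l \<in> Gamma2 \<Gamma> V"
proof -
  define g where "g = fst (\<gamma> l)"
  have W1: "subspace (V1 \<Gamma> V)" by (rule subspace_V1[OF V_sub])
  have same: "fst (\<gamma> k) = g" "comp (V1 \<Gamma> V) (snd (\<gamma> k)) = comp (V1 \<Gamma> V) (snd (\<gamma> l))"
    if kK: "k \<in> K" for k
  proof -
    obtain \<delta> where \<delta>: "\<delta> \<in> Gamma_star \<Gamma>" "\<gamma> k = euc_mult (\<gamma> l) \<delta>"
      using star_coset_eqD[OF coset[OF kK]] by blast
    have fixes_\<gamma>\<delta>: "\<forall>u\<in>Vperp V. fst (euc_mult (\<gamma> l) \<delta>) *v u = u"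
      using fixes_Vperp[OF kK] \<delta>(2) by simp
    show "fst (\<gamma> k) = g"
      using coset_fixing_Vperp(1)[OF \<gamma>_in \<delta>(1) fixes_Vperp[OF l] fixes_\<gamma>\<delta>] \<delta>(2) g_def by simp
    have "snd (\<gamma> k) - snd (\<gamma> l) \<in> V2 \<Gamma> V"
      using coset_fixing_Vperp(2)[OF \<gamma>_in \<delta>(1) fixes_Vperp[OF l] fixes_\<gamma>\<delta>] \<delta>(2) by simp
    then have "comp (V1 \<Gamma> V) (snd (\<gamma> k) - snd (\<gamma> l)) = 0" by (rule comp_V1_eq_0_if_in_V2[OF V_sub])
    then show "comp (V1 \<Gamma> V) (snd (\<gamma> k)) = comp (V1 \<Gamma> V) (snd (\<gamma> l))"
      by (simp add: comp_linear[OF W1])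
  qed
  have "comp (V1 \<Gamma> V) (g *v x - x) = 0"
  proof (rule scaled_plus_bounded_imp_zero[where v = "comp (V1 \<Gamma> V) (snd (\<gamma> l))" and B = M], intro allI)
    fix m
    obtain k where k: "k \<ge> m" "k \<in> K" using K infinite_nat_iff_unbounded_le by blast
    define D where "D = euc_act (\<gamma> k) (real (j k) *\<^sub>R x) - real (j k) *\<^sub>R x"
    have "comp (V1 \<Gamma> V) D = real (j k) *\<^sub>R comp (V1 \<Gamma> V) (g *v x - x) + comp (V1 \<Gamma> V) (snd (\<gamma> l))"
      using same[OF k(2)] unfolding D_def euc_act_scaled_displacement
      by (simp add: comp_linear[OF W1])
    moreover have "norm (comp (V1 \<Gamma> V) D) \<le> M"
      using norm_comp_le[OF W1, of D] displacement_le[of k] unfolding D_def by linarith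
    moreover have "m \<le> j k" using j_ge[of k] k(1) by linarith
    ultimately show "\<exists>j'\<ge>m. norm (real j' *\<^sub>R comp (V1 \<Gamma> V) (g *v x - x) + comp (V1 \<Gamma> V) (snd (\<gamma> l))) \<le> M"
      by auto
  qed
  moreover have "comp (Vperp V) (g *v x - x) = 0"
    using comp_Vperp_displacement_eq_0[OF V_sub x_in orthogonal_fst_\<gamma>] fixes_Vperp[OF l] g_def by simp
  ultimately have "\<forall>v\<in>V1 \<Gamma> V. g *v v = v" using prop2 fst_in_That[OF \<gamma>_in] g_def by blast
  then show ?thesis using fixes_Vperp[OF l] \<gamma>_in unfolding Gamma2_def Gamma1_def g_def by auto
qed

lemma exists_in_Gamma2:
  assumes x_in: "x \<in> {u + w | u w. u \<in> Vperp V \<and> w \<in> V1 \<Gamma> V}"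
    and prop2: "\<forall>g\<in>That \<Gamma>. comp (Vperp V) (g *v x - x) = 0 \<and> comp (V1 \<Gamma> V) (g *v x - x) = 0 \<longrightarrow>
                  (\<forall>v\<in>Vperp V. g *v v = v) \<and> (\<forall>v\<in>V1 \<Gamma> V. g *v v = v)"
  shows "\<exists>k. \<gamma> k \<in> Gamma2 \<Gamma> V"
proof -
  obtain r K0 where r: "1 \<le> r" and K0: "infinite K0" and per: "\<And>k. k \<in> K0 \<Longrightarrow> fst (epow (\<gamma> k) r) = mat 1"
    using periodic_on_infinite_subset by metis
  obtain K where KK0: "K \<subseteq> K0" and K: "infinite K"
    and coset: "\<And>k l. k \<in> K \<Longrightarrow> l \<in> K \<Longrightarrow> star_coset (\<gamma> k) = star_coset (\<gamma> l)"
    using infinite_subset_same_coset[OF K0] by metis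
  obtain l where l: "l \<in> K" using K by (metis ex_in_conv infinite_imp_nonempty)
  obtain \<kappa> t where \<kappa>: "strict_mono \<kappa>" "\<And>n. \<kappa> n \<in> K" and t: "t \<in> T"
    and lim: "(\<lambda>n. fst (\<gamma> (\<kappa> n))) \<longlonglongrightarrow> fst (\<gamma> l) ** t"
    using coset_convergent_subseq[OF K coset[OF _ l]] by metis
  have g: "\<forall>u\<in>Vperp V. (fst (\<gamma> l) ** t) *v u = u"
    using coset_limit_fixes_Vperp[OF \<kappa>(1) coset[OF \<kappa>(2) l] lim] .
  have "fst (\<gamma> (\<kappa> n)) *v u \<in> Vperp V" if "u \<in> Vperp V" for n u
  proof -
    obtain \<delta> where "\<delta> \<in> Gamma_star \<Gamma>" "\<gamma> (\<kappa> n) = euc_mult (\<gamma> l) \<delta>"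
      using star_coset_eqD[OF coset[OF \<kappa>(2) l]] by blast
    then show ?thesis
      using star_coset_preserves_Vperp[of \<delta> "\<gamma> l" u] preserves_Vperp_if_mult_fixes[OF t g] that
      by simp
  qed
  then obtain N where N: "\<And>n. n \<ge> N \<Longrightarrow> \<forall>u\<in>Vperp V. fst (\<gamma> (\<kappa> n)) *v u = u"
    using eventually_fixes_Vperp[OF r per[OF subsetD[OF KK0 \<kappa>(2)]] lim g]
    unfolding eventually_sequentially by blast
  have K': "infinite (\<kappa> ` {N..})"
    using \<kappa>(1) infinite_Ici[of N]
    by (simp add: finite_image_iff strict_mono_imp_inj_on inj_on_subset)
  have "\<gamma> (\<kappa> N) \<in> Gamma2 \<Gamma> V"
  proof (rule in_Gamma2_if_fixes_Vperp[OF x_in prop2 K'])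
    show "\<kappa> N \<in> \<kappa> ` {N..}" by simp
    show "star_coset (\<gamma> k) = star_coset (\<gamma> (\<kappa> N))" if "k \<in> \<kappa> ` {N..}" for k
      using coset that \<kappa>(2) by blast
    show "\<forall>u\<in>Vperp V. fst (\<gamma> k) *v u = u" if "k \<in> \<kappa> ` {N..}" for k
      using N that by auto
  qed
  then show ?thesis by blast
qed

end


lemma tendsto_INF_PInfty_if_uniformly_large:
  assumes "\<forall>B. \<exists>J. \<forall>j\<ge>J. \<forall>a\<in>A. B < f j a"
  shows "((\<lambda>j::nat. INF a\<in>A. ereal (f j a)) \<longlongrightarrow> \<infinity>) sequentially"
  unfolding tendsto_PInfty
proof
  fix B :: real
  obtain J where J: "\<forall>j\<ge>J. \<forall>a\<in>A. B + 1 < f j a" using assms by blast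
  have "ereal B < (INF a\<in>A. ereal (f j a))" if "j \<ge> J" for j
  proof -
    have "ereal (B + 1) \<le> (INF a\<in>A. ereal (f j a))"
      using J that by (intro INF_greatest) (auto intro: less_imp_le)
    then show ?thesis by (rule less_le_trans[rotated]) simp
  qed
  then show "\<forall>\<^sub>F j in sequentially. ereal B < (INF a\<in>A. ereal (f j a))"
    unfolding eventually_sequentially by blast
qed

theorem lemma3p5:
  fixes \<Gamma> :: "'n::finite euc set" and V :: "(real^'n) set" and T :: "(real^'n^'n) set"
    and x :: "real^'n"
  assumes grp: "euc_subgroup \<Gamma>"
    and disc: "discrete_set \<Gamma>"
    and fpf: "fixed_point_free \<Gamma>"
    \<comment> \<open>V and T as provided by Wolf's theorem\<close>
    and V_sub: "subspace V"
    and T_toral: "toral_subgroup T"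
    and T_triv: "\<forall>t\<in>T. \<forall>v\<in>V. t *v v = v"
    and star_sub: "Gamma_star \<Gamma> \<subseteq> {(t, v). t \<in> T \<and> v \<in> V}"
    and star_lattice: "\<exists>L \<phi>. L \<subseteq> V \<and> 0 \<in> L \<and> (\<forall>a\<in>L. \<forall>b\<in>L. a + b \<in> L) \<and>
         (\<forall>a\<in>L. - a \<in> L) \<and> discrete_set L \<and>
         (\<exists>K. compact K \<and> V \<subseteq> {l + k | l k. l \<in> L \<and> k \<in> K}) \<and>
         bij_betw \<phi> (Gamma_star \<Gamma>) L \<and>
         (\<forall>\<gamma>\<in>Gamma_star \<Gamma>. \<forall>\<delta>\<in>Gamma_star \<Gamma>. \<phi> (euc_mult \<gamma> \<delta>) = \<phi> \<gamma> + \<phi> \<delta>)"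
    and star_normal: "\<forall>\<gamma>\<in>\<Gamma>. \<forall>\<delta>\<in>Gamma_star \<Gamma>. euc_mult (euc_mult \<gamma> \<delta>) (euc_inv \<gamma>) \<in> Gamma_star \<Gamma>"
    and star_index: "finite ((\<lambda>\<gamma>. (\<lambda>\<delta>. euc_mult \<gamma> \<delta>) ` Gamma_star \<Gamma>) ` \<Gamma>)"
    and T_in_That: "T \<subseteq> That \<Gamma>"
    and T_normal: "\<forall>h\<in>That \<Gamma>. \<forall>t\<in>T. h ** t ** transpose h \<in> T"
    and T_index: "finite ((\<lambda>h. (\<lambda>t. h ** t) ` T) ` That \<Gamma>)"
    \<comment> \<open>the point x in V_perp + V_1, so that x~ = (x_perp, x_1, 0) = x\<close>
    and x_in: "x \<in> {u + w | u w. u \<in> Vperp V \<and> w \<in> V1 \<Gamma> V}"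
    and prop1: "\<forall>g\<in>That \<Gamma>. comp (Vperp V) (g *v x - x) = 0 \<longrightarrow>
                  (\<forall>v\<in>Vperp V. g *v v = v)"
    and prop2: "\<forall>g\<in>That \<Gamma>. comp (Vperp V) (g *v x - x) = 0 \<and> comp (V1 \<Gamma> V) (g *v x - x) = 0 \<longrightarrow>
                  (\<forall>v\<in>Vperp V. g *v v = v) \<and> (\<forall>v\<in>V1 \<Gamma> V. g *v v = v)"
  shows "((\<lambda>j::nat. INF \<gamma>\<in>\<Gamma> - Gamma2 \<Gamma> V.
             ereal (norm (euc_act \<gamma> (real j *\<^sub>R x) - real j *\<^sub>R x))) \<longlongrightarrow> \<infinity>) sequentially"
proof (rule tendsto_INF_PInfty_if_uniformly_large)
  interpret wolf_structure \<Gamma> V T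
    using grp disc V_sub T_toral T_triv star_sub star_normal star_index T_in_That
    by unfold_locales
  show "\<forall>B. \<exists>J. \<forall>j\<ge>J. \<forall>\<gamma>\<in>\<Gamma> - Gamma2 \<Gamma> V. B < norm (euc_act \<gamma> (real j *\<^sub>R x) - real j *\<^sub>R x)"
  proof (rule ccontr)
    assume "\<not> ?thesis"
    then obtain B where "\<forall>J. \<exists>j\<ge>J. \<exists>\<gamma>\<in>\<Gamma> - Gamma2 \<Gamma> V.
        norm (euc_act \<gamma> (real j *\<^sub>R x) - real j *\<^sub>R x) \<le> B"
      by (auto simp: not_less)
    then obtain j \<gamma> where "\<And>k. k \<le> j k" and \<gamma>: "\<And>k. \<gamma> k \<in> \<Gamma> - Gamma2 \<Gamma> V"
      and "\<And>k. norm (euc_act (\<gamma> k) (real (j k) *\<^sub>R x) - real (j k) *\<^sub>R x) \<le> B"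
      by metis
    then interpret wolf_bounded_orbit \<Gamma> V T x B j \<gamma>
      using prop1 by unfold_locales auto
    show False using exists_in_Gamma2[OF x_in prop2] \<gamma> by blast
  qed
qed


end
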